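(* For any $n\ge2$, $\theta\in(0,1/2)$ and $0<\mu\le\frac1{20\sqrt n}$, for all $\mathbf w\in\mathbb R^{n-1}$ with $\|\mathbf w\|\le\frac{\mu}{4\sqrt2}$, $$\nabla^2_{\mathbf w}\mathbb E\big[h_\mu(\mathbf q(\mathbf w)^*\mathbf x)\big]\succeq\frac{\theta}{5\sqrt{2\pi}\,\mu}\mathbf I,$$ where $\mathbf x\in\mathbb R^n$, $\mathbf x\sim_{i.i.d.}\mathrm{BG}(\theta)$.
   Context: $Z\sim\mathrm{BG}(\theta)$ means $Z=BG$ with $B\sim\mathrm{Ber}(\theta)$, $G\sim\mathcal N(0,1)$ independent; $\mathbf x\sim_{i.i.d.}\mathrm{BG}(\theta)$ means independent $\mathrm{BG}(\theta)$ coordinates. $h_\mu(z)=\mu\log\cosh(z/\mu)$. For $\mathbf w$ in the open unit ball of $\mathbb R^{n-1}$, $\mathbf q(\mathbf w)=(\mathbf w,\sqrt{1-\|\mathbf w\|^2})$. $\nabla^2_{\mathbf w}$ is the Hessian with respect to $\mathbf w$; $\succeq$ is the positive semidefinite order. *)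

theory Defs
  imports "HOL-Probability.Probability"
begin

definition BG :: "real \<Rightarrow> real measure" where
  "BG \<theta> = distr (measure_pmf (bernoulli_pmf \<theta>) \<Otimes>\<^sub>M density lborel std_normal_density) borel
          (\<lambda>(b, g). (if b then 1 else 0) * g)"

definition h_mu :: "real \<Rightarrow> real \<Rightarrow> real" where
  "h_mu \<mu> z = \<mu> * ln (cosh (z / \<mu>))"

text \<open>q(w) = (w, sqrt(1 - |w|^2)) in R^n, where R^{n-1} is indexed by the finite type 'm
  and R^n by 'm option (the extra index None is the last coordinate).\<close>
definition qvec :: "real^'m::finite \<Rightarrow> 'm option \<Rightarrow> real" where
  "qvec w i = (case i of Some j \<Rightarrow> w $ j | None \<Rightarrow> sqrt (1 - (norm w)\<^sup>2))"

definition obj :: "real \<Rightarrow> real \<Rightarrow> real^'m::finite \<Rightarrow> real" where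
  "obj \<theta> \<mu> w = (\<integral>x. h_mu \<mu> (\<Sum>i\<in>UNIV. qvec w i * x i) \<partial>(PiM (UNIV :: 'm option set) (\<lambda>_. BG \<theta>)))"

definition has_hessian_at :: "(real^'m::finite \<Rightarrow> real) \<Rightarrow> (real^'m \<Rightarrow> real^'m) \<Rightarrow> real^'m \<Rightarrow> bool" where
  "has_hessian_at f H w \<longleftrightarrow>
     (\<exists>G. (\<forall>u. norm u < 1 \<longrightarrow> (f has_derivative (\<lambda>v. G u \<bullet> v)) (at u)) \<and> (G has_derivative H) (at w))"

end

theory Submission
  imports Defs
begin

text \<open>Write \<open>x = (x', x\<^sub>n)\<close> (below: \<open>xbar x\<close> and \<open>x None\<close>) and \<open>z = q(w)\<^sup>T x\<close>.
  Differentiating twice under the expectation (dominated convergence: \<open>|tanh| \<le> 1\<close> and \<open>x\<close> has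
  all moments) gives the Hessian integrand \<open>(1 - tanh\<^sup>2(z/\<mu>)) a a\<^sup>T/\<mu> - tanh(z/\<mu>) x\<^sub>n (I/q\<^sub>n + w w\<^sup>T/q\<^sub>n\<^sup>3)\<close>
  with \<open>a = x' - (x\<^sub>n/q\<^sub>n) w\<close>. On the event \<open>x\<^sub>n = 0\<close>, of probability \<open>1 - \<theta>\<close>, it equals the first
  term, which is at least \<open>(1 - (w\<^sup>Tx'/\<mu>)\<^sup>2) (v\<^sup>Tx')\<^sup>2/\<mu>\<close> in direction \<open>v\<close> because \<open>tanh\<^sup>2 t \<le> t\<^sup>2\<close>;
  elsewhere it is at least \<open>-3|x\<^sub>n| |v|\<^sup>2\<close> once \<open>|w| \<le> 1/4\<close>. The second and fourth moments of
  Bernoulli-Gaussian vectors then give \<open>v\<^sup>T H v \<ge> ((1 - \<theta>) \<theta> (1 - 3|w|\<^sup>2/\<mu>\<^sup>2)/\<mu> - 3\<theta>) |v|\<^sup>2\<close>, and the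
  hypotheses on \<open>\<theta>\<close>, \<open>\<mu>\<close> and \<open>|w|\<close> make this at least \<open>\<theta> |v|\<^sup>2 / (5 \<surd>(2\<pi>) \<mu>)\<close>.\<close>

section \<open>Bernoulli-Gaussian variables\<close>

abbreviation std_normal :: "real measure" where
  "std_normal \<equiv> density lborel std_normal_density"

lemma prob_space_std_normal: "prob_space std_normal"
  by (rule prob_space_normal_density) simp

lemma space_BG [simp]: "space (BG \<theta>) = UNIV"
  by (simp add: BG_def)

lemma sets_BG [simp]: "sets (BG \<theta>) = sets borel"
  by (simp add: BG_def)

lemma prob_space_BG:
  assumes "0 \<le> \<theta>" "\<theta> \<le> 1"
  shows "prob_space (BG \<theta>)"
proof -
  interpret N: prob_space std_normal by (rule prob_space_std_normal)
  interpret P: pair_prob_space "measure_pmf (bernoulli_pmf \<theta>)" std_normal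
    by unfold_locales
  show ?thesis unfolding BG_def by (rule P.prob_space_distr) measurable
qed

lemma nn_integral_BG:
  fixes f :: "real \<Rightarrow> ennreal"
  assumes th: "0 \<le> \<theta>" "\<theta> \<le> 1" and f: "f \<in> borel_measurable borel"
  shows "(\<integral>\<^sup>+y. f y \<partial>BG \<theta>) = ennreal (1 - \<theta>) * f 0 + ennreal \<theta> * (\<integral>\<^sup>+g. f g \<partial>std_normal)"
proof -
  interpret N: prob_space std_normal by (rule prob_space_std_normal)
  interpret P: pair_sigma_finite "measure_pmf (bernoulli_pmf \<theta>)" std_normal
    by unfold_locales
  have m: "(\<lambda>(b, g). (if b then 1 else 0) * g)
      \<in> borel_measurable (measure_pmf (bernoulli_pmf \<theta>) \<Otimes>\<^sub>M std_normal)"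
    by measurable
  have "(\<integral>\<^sup>+y. f y \<partial>BG \<theta>) = (\<integral>\<^sup>+z. f ((\<lambda>(b, g). (if b then 1 else 0) * g) z)
      \<partial>(measure_pmf (bernoulli_pmf \<theta>) \<Otimes>\<^sub>M std_normal))"
    unfolding BG_def by (rule nn_integral_distr[OF m]) (simp add: f)
  also have "\<dots> = (\<integral>\<^sup>+b. \<integral>\<^sup>+g. f ((if b then 1 else 0) * g) \<partial>std_normal \<partial>measure_pmf (bernoulli_pmf \<theta>))"
    by (subst N.nn_integral_fst[symmetric]) (use f m in \<open>auto simp: split_beta'\<close>)
  also have "\<dots> = (\<Sum>b\<in>{True, False}. (\<integral>\<^sup>+g. f ((if b then 1 else 0) * g) \<partial>std_normal)
      * ennreal (pmf (bernoulli_pmf \<theta>) b))"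
    by (rule nn_integral_measure_pmf_support) auto
  also have "\<dots> = ennreal (1 - \<theta>) * f 0 + ennreal \<theta> * (\<integral>\<^sup>+g. f g \<partial>std_normal)"
    using th by (simp add: N.emeasure_space_1[simplified] mult.commute add.commute)
  finally show ?thesis .
qed

lemma integrable_BG:
  fixes f :: "real \<Rightarrow> real"
  assumes th: "0 \<le> \<theta>" "\<theta> \<le> 1" and f: "integrable std_normal f"
  shows "integrable (BG \<theta>) f"
proof -
  have fb: "f \<in> borel_measurable borel" using f by auto
  have "(\<integral>\<^sup>+y. ennreal (norm (f y)) \<partial>BG \<theta>)
      = ennreal (1 - \<theta>) * norm (f 0) + ennreal \<theta> * (\<integral>\<^sup>+g. norm (f g) \<partial>std_normal)"
    using th fb by (subst nn_integral_BG) auto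
  also have "\<dots> < \<infinity>"
    using f unfolding integrable_iff_bounded by (simp add: ennreal_mult_less_top)
  finally show ?thesis
    using fb unfolding integrable_iff_bounded by (simp add: BG_def)
qed

lemma integral_BG:
  fixes f :: "real \<Rightarrow> real"
  assumes th: "0 \<le> \<theta>" "\<theta> \<le> 1" and f: "integrable std_normal f"
  shows "(\<integral>y. f y \<partial>BG \<theta>) = (1 - \<theta>) * f 0 + \<theta> * (\<integral>g. f g \<partial>std_normal)"
proof -
  interpret N: prob_space std_normal by (rule prob_space_std_normal)
  interpret P: pair_sigma_finite "measure_pmf (bernoulli_pmf \<theta>)" std_normal
    by unfold_locales
  have fb: "f \<in> borel_measurable borel" using f by auto
  have m: "(\<lambda>(b, g). (if b then 1 else 0) * g)
      \<in> borel_measurable (measure_pmf (bernoulli_pmf \<theta>) \<Otimes>\<^sub>M std_normal)"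
    by measurable
  have "integrable (measure_pmf (bernoulli_pmf \<theta>) \<Otimes>\<^sub>M std_normal)
      (\<lambda>z. f ((\<lambda>(b, g). (if b then 1 else 0) * g) z))"
    using integrable_BG[OF th f] unfolding BG_def
    by (subst (asm) integrable_distr_eq[OF m]) (auto simp: fb)
  note Fubini = P.integral_fst'[OF this]
  have "(\<integral>y. f y \<partial>BG \<theta>) = (\<integral>z. f ((\<lambda>(b, g). (if b then 1 else 0) * g) z)
      \<partial>(measure_pmf (bernoulli_pmf \<theta>) \<Otimes>\<^sub>M std_normal))"
    unfolding BG_def by (rule integral_distr[OF m]) (simp add: fb)
  also have "\<dots> = (\<integral>b. \<integral>g. f ((if b then 1 else 0) * g) \<partial>std_normal \<partial>measure_pmf (bernoulli_pmf \<theta>))"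
    using Fubini by (simp add: split_beta')
  also have "\<dots> = (\<Sum>b\<in>{True, False}. (\<integral>g. f ((if b then 1 else 0) * g) \<partial>std_normal)
      * pmf (bernoulli_pmf \<theta>) b)"
    by (rule integral_measure_pmf_real) auto
  also have "\<dots> = (1 - \<theta>) * f 0 + \<theta> * (\<integral>g. f g \<partial>std_normal)"
    using th by (simp add: N.prob_space[simplified])
  finally show ?thesis .
qed

lemma integrable_std_normal_power: "integrable std_normal (\<lambda>x. x ^ k)"
  by (subst integrable_density) (auto simp: integrable_std_normal_moment normal_density_nonneg)

lemma integrable_std_normal_abs_power: "integrable std_normal (\<lambda>x. \<bar>x\<bar> ^ k)"
  by (subst integrable_density) (auto simp: integrable_std_normal_moment_abs normal_density_nonneg)

lemma integral_std_normal_power: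
  "(\<integral>x. x ^ k \<partial>std_normal) = (LBINT x. std_normal_density x * x ^ k)"
  by (subst integral_density) (auto simp: normal_density_nonneg)

lemma integral_std_normal_abs_power:
  "(\<integral>x. \<bar>x\<bar> ^ k \<partial>std_normal) = (LBINT x. std_normal_density x * \<bar>x\<bar> ^ k)"
  by (subst integral_density) (auto simp: normal_density_nonneg)

definition BG_moment :: "real \<Rightarrow> nat \<Rightarrow> real" where
  "BG_moment \<theta> k = (\<integral>y. y ^ k \<partial>BG \<theta>)"

lemma integrable_BG_power: "0 \<le> \<theta> \<Longrightarrow> \<theta> \<le> 1 \<Longrightarrow> integrable (BG \<theta>) (\<lambda>y. y ^ k)"
  by (rule integrable_BG) (auto simp: integrable_std_normal_power)

lemma integrable_BG_abs_power: "0 \<le> \<theta> \<Longrightarrow> \<theta> \<le> 1 \<Longrightarrow> integrable (BG \<theta>) (\<lambda>y. \<bar>y\<bar> ^ k)"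
  by (rule integrable_BG) (auto simp: integrable_std_normal_abs_power)

lemma BG_moment_odd:
  assumes "0 \<le> \<theta>" "\<theta> \<le> 1"
  shows "BG_moment \<theta> (2 * k + 1) = 0"
proof -
  have "BG_moment \<theta> (2 * k + 1)
      = (1 - \<theta>) * 0 ^ (2 * k + 1) + \<theta> * (LBINT x. std_normal_density x * x ^ (2 * k + 1))"
    unfolding BG_moment_def integral_BG[OF assms integrable_std_normal_power]
      integral_std_normal_power ..
  then show ?thesis by (simp only: integral_std_normal_moment_odd) simp
qed

lemma BG_moment_even:
  assumes "0 \<le> \<theta>" "\<theta> \<le> 1"
  shows "BG_moment \<theta> (2 * k) = (if k = 0 then 1 else \<theta> * (fact (2 * k) / (2 ^ k * fact k)))"
  unfolding BG_moment_def using assms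
  by (subst integral_BG)
     (auto simp: integrable_std_normal_power integral_std_normal_power integral_std_normal_moment_even)

text \<open>Stated with \<open>Suc\<close>, the form in which \<open>count_list\<close> evaluates.\<close>
lemma BG_moments_up_to_4:
  assumes "0 \<le> \<theta>" "\<theta> \<le> 1"
  shows "BG_moment \<theta> 0 = 1" "BG_moment \<theta> (Suc 0) = 0" "BG_moment \<theta> (Suc (Suc 0)) = \<theta>"
    "BG_moment \<theta> (Suc (Suc (Suc 0))) = 0" "BG_moment \<theta> (Suc (Suc (Suc (Suc 0)))) = 3 * \<theta>"
  using BG_moment_even[OF assms, of 0] BG_moment_even[OF assms, of 1] BG_moment_even[OF assms, of 2]
    BG_moment_odd[OF assms, of 0] BG_moment_odd[OF assms, of 1]
  by (simp_all add: fact_numeral numeral_2_eq_2 numeral_3_eq_3 numeral_eq_Suc)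

lemma integral_BG_abs_le:
  assumes "0 \<le> \<theta>" "\<theta> \<le> 1"
  shows "(\<integral>y. \<bar>y\<bar> \<partial>BG \<theta>) \<le> \<theta>"
proof -
  have "(\<integral>y. \<bar>y\<bar> ^ (2 * 0 + 1) \<partial>BG \<theta>)
      = (1 - \<theta>) * \<bar>0\<bar> ^ (2 * 0 + 1) + \<theta> * (LBINT x. std_normal_density x * \<bar>x\<bar> ^ (2 * 0 + 1))"
    unfolding integral_BG[OF assms integrable_std_normal_abs_power] integral_std_normal_abs_power ..
  then have "(\<integral>y. \<bar>y\<bar> \<partial>BG \<theta>) = \<theta> * sqrt (2 / pi)"
    by (simp only: integral_std_normal_moment_abs_odd) simp
  moreover have "sqrt (2 / pi) \<le> 1" using pi_gt3 by simp
  ultimately show ?thesis using assms by (simp add: mult_left_le)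
qed

lemma
  assumes "0 \<le> \<theta>" "\<theta> \<le> 1"
  shows integrable_BG_indicator_0: "integrable (BG \<theta>) (indicator {0} :: real \<Rightarrow> real)"
    and measure_BG_0: "measure (BG \<theta>) {0} = 1 - \<theta>"
proof -
  interpret N: prob_space std_normal by (rule prob_space_std_normal)
  have "emeasure std_normal {0} = 0"
    by (subst emeasure_density) (auto intro!: nn_integral_null_set)
  then have null: "measure std_normal {0} = 0"
    by (simp add: measure_def)
  have i: "integrable std_normal (indicator {0} :: real \<Rightarrow> real)"
    by (rule integrable_real_indicator) (simp_all add: N.emeasure_finite less_top[symmetric])
  show "integrable (BG \<theta>) (indicator {0} :: real \<Rightarrow> real)"
    by (rule integrable_BG[OF assms i])
  show "measure (BG \<theta>) {0} = 1 - \<theta>"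
    using integral_BG[OF assms i] null by simp
qed

section \<open>Moments of Bernoulli-Gaussian vectors\<close>

abbreviation BG_iid :: "real \<Rightarrow> ('i::finite \<Rightarrow> real) measure" where
  "BG_iid \<theta> \<equiv> PiM UNIV (\<lambda>_. BG \<theta>)"

lemma
  fixes f :: "'i::finite \<Rightarrow> real \<Rightarrow> real"
  assumes th: "0 \<le> \<theta>" "\<theta> \<le> 1" and f: "\<And>i. integrable (BG \<theta>) (f i)"
  shows integrable_BG_iid_prod: "integrable (BG_iid \<theta>) (\<lambda>x. \<Prod>i\<in>UNIV. f i (x i))"
    and integral_BG_iid_prod:
      "(\<integral>x. (\<Prod>i\<in>UNIV. f i (x i)) \<partial>BG_iid \<theta>) = (\<Prod>i\<in>UNIV. \<integral>y. f i y \<partial>BG \<theta>)"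
proof -
  interpret product_prob_space "\<lambda>_. BG \<theta>" "UNIV :: 'i set"
    by (rule product_prob_spaceI) (rule prob_space_BG[OF th])
  show "integrable (BG_iid \<theta>) (\<lambda>x. \<Prod>i\<in>UNIV. f i (x i))"
    by (rule product_integrable_prod) (auto simp: f)
  show "(\<integral>x. (\<Prod>i\<in>UNIV. f i (x i)) \<partial>BG_iid \<theta>) = (\<Prod>i\<in>UNIV. \<integral>y. f i y \<partial>BG \<theta>)"
    by (rule product_integral_prod) (auto simp: f)
qed

lemma measurable_BG_iid_component [measurable]:
  "(\<lambda>x. x i) \<in> borel_measurable (BG_iid \<theta> :: ('i::finite \<Rightarrow> real) measure)"
proof -
  have "(\<lambda>x. x i) \<in> measurable (BG_iid \<theta> :: ('i \<Rightarrow> real) measure) (BG \<theta>)"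
    by (rule measurable_component_singleton) simp
  moreover have "measurable (BG_iid \<theta> :: ('i \<Rightarrow> real) measure) (BG \<theta>)
      = borel_measurable (BG_iid \<theta> :: ('i \<Rightarrow> real) measure)"
    by (rule measurable_cong_sets) simp_all
  ultimately show ?thesis by simp
qed

lemma prod_list_eq_prod_count_list:
  fixes f :: "'i::finite \<Rightarrow> 'a::comm_monoid_mult"
  shows "(\<Prod>j\<leftarrow>l. f j) = (\<Prod>t\<in>UNIV. f t ^ count_list l t)"
proof (induction l)
  case (Cons a l)
  have "(\<Prod>t\<in>UNIV. f t ^ count_list (a # l) t) = (\<Prod>t\<in>UNIV. (if t = a then f t else 1) * f t ^ count_list l t)"
    by (intro prod.cong) auto
  also have "\<dots> = f a * (\<Prod>t\<in>UNIV. f t ^ count_list l t)"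
    by (simp add: prod.distrib)
  finally show ?case using Cons by simp
qed simp

lemma integrable_BG_iid_prod_list_abs:
  assumes "0 \<le> \<theta>" "\<theta> \<le> 1"
  shows "integrable (BG_iid \<theta>) (\<lambda>x::'i::finite \<Rightarrow> real. \<Prod>j\<leftarrow>l. \<bar>x j\<bar>)"
  unfolding prod_list_eq_prod_count_list
  by (rule integrable_BG_iid_prod[OF assms integrable_BG_abs_power[OF assms]])

lemma prod_UNIV_option: "(\<Prod>i\<in>(UNIV :: 'i::finite option set). f i) = f None * (\<Prod>j\<in>UNIV. f (Some j))"
  by (simp add: UNIV_option_conv prod.reindex)

lemma sum_UNIV_option: "(\<Sum>i\<in>(UNIV :: 'i::finite option set). f i) = f None + (\<Sum>j\<in>UNIV. f (Some j))"
  by (simp add: UNIV_option_conv sum.reindex)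

lemma
  fixes l :: "'m::finite list"
  assumes th: "0 \<le> \<theta>" "\<theta> \<le> 1"
  shows integrable_BG_iid_indicator_prod_list:
      "integrable (BG_iid \<theta>) (\<lambda>x. indicator {0} (x None) * (\<Prod>j\<leftarrow>l. x (Some j)))"
    and integral_BG_iid_indicator_prod_list:
      "(\<integral>x. indicator {0} (x None) * (\<Prod>j\<leftarrow>l. x (Some j)) \<partial>BG_iid \<theta>)
        = (1 - \<theta>) * (\<Prod>t\<in>set l. BG_moment \<theta> (count_list l t))"
proof -
  define f :: "'m option \<Rightarrow> real \<Rightarrow> real" where
    "f i = (case i of None \<Rightarrow> indicator {0} | Some t \<Rightarrow> (\<lambda>y. y ^ count_list l t))" for i
  have f: "integrable (BG \<theta>) (f i)" for i
    by (cases i) (auto simp: f_def integrable_BG_power[OF th] integrable_BG_indicator_0[OF th])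
  have eq: "indicator {0} (x None) * (\<Prod>j\<leftarrow>l. x (Some j)) = (\<Prod>i\<in>UNIV. f i (x i))" for x
    by (simp add: prod_UNIV_option f_def prod_list_eq_prod_count_list)
  show "integrable (BG_iid \<theta>) (\<lambda>x. indicator {0} (x None) * (\<Prod>j\<leftarrow>l. x (Some j)))"
    unfolding eq by (rule integrable_BG_iid_prod[OF th f])
  have "(\<Prod>t\<in>UNIV. BG_moment \<theta> (count_list l t)) = (\<Prod>t\<in>set l. BG_moment \<theta> (count_list l t))"
    by (rule prod.mono_neutral_right) (auto simp: BG_moments_up_to_4[OF th])
  then show "(\<integral>x. indicator {0} (x None) * (\<Prod>j\<leftarrow>l. x (Some j)) \<partial>BG_iid \<theta>)
      = (1 - \<theta>) * (\<Prod>t\<in>set l. BG_moment \<theta> (count_list l t))"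
    unfolding eq integral_BG_iid_prod[OF th f]
    by (simp add: prod_UNIV_option f_def BG_moment_def measure_BG_0[OF th])
qed

lemma integral_BG_iid_indicator_monomial_2:
  assumes "0 \<le> \<theta>" "\<theta> \<le> 1"
  shows "(\<integral>x. indicator {0} (x None) * (x (Some a) * x (Some b)) \<partial>BG_iid \<theta>)
    = (1 - \<theta>) * (if a = b then \<theta> else 0)"
  using integral_BG_iid_indicator_prod_list[OF assms, of "[a, b]"]
  by (cases "a = b") (auto simp: BG_moments_up_to_4[OF assms])

lemma integral_BG_iid_indicator_monomial_4:
  assumes "0 \<le> \<theta>" "\<theta> \<le> 1"
  shows "(\<integral>x. indicator {0} (x None) * (x (Some a) * (x (Some b) * (x (Some c) * x (Some d)))) \<partial>BG_iid \<theta>)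
     = (1 - \<theta>) * (\<theta>\<^sup>2 * ((if a = b \<and> c = d then 1 else 0) + (if a = c \<and> b = d then 1 else 0)
         + (if a = d \<and> b = c then 1 else 0)) + (3 * \<theta> - 3 * \<theta>\<^sup>2) * (if a = b \<and> b = c \<and> c = d then 1 else 0))"
  using integral_BG_iid_indicator_prod_list[OF assms, of "[a, b, c, d]"]
  by (cases "a = b"; cases "a = c"; cases "a = d"; cases "b = c"; cases "b = d"; cases "c = d")
     (auto simp: BG_moments_up_to_4[OF assms] prod.insert_if power2_eq_square)

definition xbar :: "('m::finite option \<Rightarrow> real) \<Rightarrow> real^'m" where
  "xbar x = (\<chi> j. x (Some j))"

lemma inner_xbar: "u \<bullet> xbar x = (\<Sum>j\<in>UNIV. u $ j * x (Some j))"
  by (simp add: xbar_def inner_vec_def)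

lemma if_conj_then_else_0: "(if P \<and> Q then x else 0) = (if P then if Q then x else 0 else 0)"
  by simp

lemma sum_if_then_else_0: "(\<Sum>x\<in>A. if P then f x else 0) = (if P then sum f A else 0)"
  by simp

lemma mult_if_then_else_0: "x * (if P then y else 0) = (if P then x * y else (0::'a::mult_zero))"
  by simp

lemmas sum_Kronecker_delta_simps =
  if_conj_then_else_0 mult_if_then_else_0 sum_if_then_else_0 sum.delta sum.delta'

lemma
  fixes v :: "real^'m::finite"
  assumes th: "0 \<le> \<theta>" "\<theta> \<le> 1"
  shows integrable_BG_iid_indicator_quadratic_form:
      "integrable (BG_iid \<theta>) (\<lambda>x. indicator {0} (x None) * (v \<bullet> xbar x)\<^sup>2)"
    and integral_BG_iid_indicator_quadratic_form:
      "(\<integral>x. indicator {0} (x None) * (v \<bullet> xbar x)\<^sup>2 \<partial>BG_iid \<theta>) = (1 - \<theta>) * \<theta> * (v \<bullet> v)"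
proof -
  define M where "M a b x = indicator {0} (x None) * (x (Some a) * x (Some b))"
    for a b and x :: "'m option \<Rightarrow> real"
  have M: "integrable (BG_iid \<theta>) (M a b)" for a b
    using integrable_BG_iid_indicator_prod_list[OF th, of "[a, b]"] by (simp add: M_def[abs_def])
  have eq: "indicator {0} (x None) * (v \<bullet> xbar x)\<^sup>2 = (\<Sum>a\<in>UNIV. \<Sum>b\<in>UNIV. (v $ a * v $ b) * M a b x)" for x
    unfolding inner_xbar power2_eq_square M_def sum_product
    by (simp add: sum_distrib_left mult_ac)
  show "integrable (BG_iid \<theta>) (\<lambda>x. indicator {0} (x None) * (v \<bullet> xbar x)\<^sup>2)"
    unfolding eq by (intro Bochner_Integration.integrable_sum Bochner_Integration.integrable_mult_right M)
  have "(\<integral>x. indicator {0} (x None) * (v \<bullet> xbar x)\<^sup>2 \<partial>BG_iid \<theta>)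
      = (\<Sum>a\<in>UNIV. \<Sum>b\<in>UNIV. (v $ a * v $ b) * (\<integral>x. M a b x \<partial>BG_iid \<theta>))"
    unfolding eq by (simp add: integrable_sum integrable_mult_right M)
  also have "\<dots> = (\<Sum>a\<in>UNIV. \<Sum>b\<in>UNIV. (v $ a * v $ b) * ((1 - \<theta>) * (if a = b then \<theta> else 0)))"
    unfolding M_def integral_BG_iid_indicator_monomial_2[OF th] ..
  also have "\<dots> = (1 - \<theta>) * \<theta> * (v \<bullet> v)"
    by (simp add: if_distrib[of "\<lambda>t. _ * t"] inner_vec_def sum_distrib_left mult_ac cong: if_cong)
  finally show "(\<integral>x. indicator {0} (x None) * (v \<bullet> xbar x)\<^sup>2 \<partial>BG_iid \<theta>) = (1 - \<theta>) * \<theta> * (v \<bullet> v)" .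
qed

lemma
  fixes u v :: "real^'m::finite"
  assumes th: "0 \<le> \<theta>" "\<theta> \<le> 1"
  shows integrable_BG_iid_indicator_quartic_form:
      "integrable (BG_iid \<theta>) (\<lambda>x. indicator {0} (x None) * ((u \<bullet> xbar x)\<^sup>2 * (v \<bullet> xbar x)\<^sup>2))"
    and integral_BG_iid_indicator_quartic_form:
      "(\<integral>x. indicator {0} (x None) * ((u \<bullet> xbar x)\<^sup>2 * (v \<bullet> xbar x)\<^sup>2) \<partial>BG_iid \<theta>)
        = (1 - \<theta>) * (\<theta>\<^sup>2 * ((u \<bullet> u) * (v \<bullet> v) + 2 * (u \<bullet> v)\<^sup>2)
            + (3 * \<theta> - 3 * \<theta>\<^sup>2) * (\<Sum>a\<in>UNIV. (u $ a)\<^sup>2 * (v $ a)\<^sup>2))"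
proof -
  define M where "M a b c d x = indicator {0} (x None) * (x (Some a) * (x (Some b) * (x (Some c) * x (Some d))))"
    for a b c d and x :: "'m option \<Rightarrow> real"
  define S where "S P = (\<Sum>a\<in>UNIV. \<Sum>b\<in>UNIV. \<Sum>c\<in>UNIV. \<Sum>d\<in>UNIV.
      (u $ a * u $ b * v $ c * v $ d) * (if P a b c d then 1 else (0::real)))" for P
  have M: "integrable (BG_iid \<theta>) (M a b c d)" for a b c d
    using integrable_BG_iid_indicator_prod_list[OF th, of "[a, b, c, d]"] by (simp add: M_def[abs_def])
  have eq: "indicator {0} (x None) * ((u \<bullet> xbar x)\<^sup>2 * (v \<bullet> xbar x)\<^sup>2)
      = (\<Sum>a\<in>UNIV. \<Sum>b\<in>UNIV. \<Sum>c\<in>UNIV. \<Sum>d\<in>UNIV. (u $ a * u $ b * v $ c * v $ d) * M a b c d x)" for x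
  proof -
    have "(u \<bullet> xbar x)\<^sup>2 * (v \<bullet> xbar x)\<^sup>2 = (\<Sum>a\<in>UNIV. u $ a * x (Some a))
        * ((\<Sum>b\<in>UNIV. u $ b * x (Some b)) * ((\<Sum>c\<in>UNIV. v $ c * x (Some c)) * (\<Sum>d\<in>UNIV. v $ d * x (Some d))))"
      by (simp add: inner_xbar power2_eq_square)
    also have "\<dots> = (\<Sum>a\<in>UNIV. \<Sum>b\<in>UNIV. \<Sum>c\<in>UNIV. \<Sum>d\<in>UNIV. u $ a * x (Some a)
        * (u $ b * x (Some b) * (v $ c * x (Some c) * (v $ d * x (Some d)))))"
      by (simp only: sum_distrib_right) (simp only: sum_distrib_left)
    finally show ?thesis
      by (simp add: M_def sum_distrib_left mult_ac)
  qed
  show "integrable (BG_iid \<theta>) (\<lambda>x. indicator {0} (x None) * ((u \<bullet> xbar x)\<^sup>2 * (v \<bullet> xbar x)\<^sup>2))"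
    unfolding eq by (intro Bochner_Integration.integrable_sum Bochner_Integration.integrable_mult_right M)
  have "(\<integral>x. indicator {0} (x None) * ((u \<bullet> xbar x)\<^sup>2 * (v \<bullet> xbar x)\<^sup>2) \<partial>BG_iid \<theta>)
      = (\<Sum>a\<in>UNIV. \<Sum>b\<in>UNIV. \<Sum>c\<in>UNIV. \<Sum>d\<in>UNIV. (u $ a * u $ b * v $ c * v $ d) * (\<integral>x. M a b c d x \<partial>BG_iid \<theta>))"
    unfolding eq by (simp add: integrable_sum integrable_mult_right M)
  also have "\<dots> = (1 - \<theta>) * (\<theta>\<^sup>2 * (S (\<lambda>a b c d. a = b \<and> c = d) + S (\<lambda>a b c d. a = c \<and> b = d)
      + S (\<lambda>a b c d. a = d \<and> b = c)) + (3 * \<theta> - 3 * \<theta>\<^sup>2) * S (\<lambda>a b c d. a = b \<and> b = c \<and> c = d))"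
    unfolding M_def integral_BG_iid_indicator_monomial_4[OF th] S_def
    by (simp only: sum_distrib_left sum.distrib[symmetric] distrib_left distrib_right mult_ac)
  also have "S (\<lambda>a b c d. a = b \<and> c = d) = (u \<bullet> u) * (v \<bullet> v)"
    unfolding S_def by (simp add: sum_Kronecker_delta_simps inner_vec_def sum_product cong: if_cong)
      (simp add: mult_ac)
  also have "S (\<lambda>a b c d. a = c \<and> b = d) = (u \<bullet> v)\<^sup>2"
    unfolding S_def
    by (simp add: sum_Kronecker_delta_simps inner_vec_def sum_product power2_eq_square mult_ac cong: if_cong)
  also have "S (\<lambda>a b c d. a = d \<and> b = c) = (u \<bullet> v)\<^sup>2"
    unfolding S_def
    by (simp add: sum_Kronecker_delta_simps inner_vec_def sum_product power2_eq_square mult_ac cong: if_cong)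
  also have "S (\<lambda>a b c d. a = b \<and> b = c \<and> c = d) = (\<Sum>a\<in>UNIV. (u $ a)\<^sup>2 * (v $ a)\<^sup>2)"
    unfolding S_def by (simp add: sum_Kronecker_delta_simps power2_eq_square mult_ac cong: if_cong)
  finally show "(\<integral>x. indicator {0} (x None) * ((u \<bullet> xbar x)\<^sup>2 * (v \<bullet> xbar x)\<^sup>2) \<partial>BG_iid \<theta>)
      = (1 - \<theta>) * (\<theta>\<^sup>2 * ((u \<bullet> u) * (v \<bullet> v) + 2 * (u \<bullet> v)\<^sup>2)
          + (3 * \<theta> - 3 * \<theta>\<^sup>2) * (\<Sum>a\<in>UNIV. (u $ a)\<^sup>2 * (v $ a)\<^sup>2))"
    by simp
qed

lemma integral_BG_iid_indicator_quartic_form_le: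
  fixes u v :: "real^'m::finite"
  assumes th: "0 \<le> \<theta>" "\<theta> \<le> 1"
  shows "(\<integral>x. indicator {0} (x None) * ((u \<bullet> xbar x)\<^sup>2 * (v \<bullet> xbar x)\<^sup>2) \<partial>BG_iid \<theta>)
    \<le> 3 * (1 - \<theta>) * \<theta> * ((u \<bullet> u) * (v \<bullet> v))"
proof -
  define X where "X = (u \<bullet> u) * (v \<bullet> v)"
  have "\<bar>u \<bullet> v\<bar>\<^sup>2 \<le> (norm u * norm v)\<^sup>2"
    using Cauchy_Schwarz_ineq2[of u v] by (rule power_mono) simp
  then have cs: "(u \<bullet> v)\<^sup>2 \<le> X"
    unfolding X_def by (simp add: power_mult_distrib power2_norm_eq_inner)
  have "(\<Sum>a\<in>UNIV. (u $ a)\<^sup>2 * (v $ a)\<^sup>2) \<le> (\<Sum>a\<in>UNIV. \<Sum>c\<in>UNIV. (u $ a)\<^sup>2 * (v $ c)\<^sup>2)"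
    by (intro sum_mono member_le_sum[where f="\<lambda>c. (u $ _)\<^sup>2 * (v $ c)\<^sup>2"]) auto
  also have "\<dots> = X"
    unfolding X_def by (simp only: inner_vec_def inner_real_def sum_product power2_eq_square)
  finally have diag: "(\<Sum>a\<in>UNIV. (u $ a)\<^sup>2 * (v $ a)\<^sup>2) \<le> X" .
  have "0 \<le> 3 * \<theta> - 3 * \<theta>\<^sup>2"
    using th by (simp add: power2_eq_square mult_left_le)
  then have "\<theta>\<^sup>2 * (X + 2 * (u \<bullet> v)\<^sup>2) + (3 * \<theta> - 3 * \<theta>\<^sup>2) * (\<Sum>a\<in>UNIV. (u $ a)\<^sup>2 * (v $ a)\<^sup>2)
      \<le> \<theta>\<^sup>2 * (X + 2 * X) + (3 * \<theta> - 3 * \<theta>\<^sup>2) * X"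
    using cs diag by (intro add_mono mult_left_mono) auto
  also have "\<dots> = 3 * \<theta> * X"
    by (simp add: algebra_simps power2_eq_square)
  finally have "(1 - \<theta>) * (\<theta>\<^sup>2 * (X + 2 * (u \<bullet> v)\<^sup>2)
      + (3 * \<theta> - 3 * \<theta>\<^sup>2) * (\<Sum>a\<in>UNIV. (u $ a)\<^sup>2 * (v $ a)\<^sup>2)) \<le> (1 - \<theta>) * (3 * \<theta> * X)"
    using th by (intro mult_left_mono) auto
  then show ?thesis
    unfolding integral_BG_iid_indicator_quartic_form[OF th] X_def[symmetric] by (simp add: mult_ac)
qed

section \<open>Differentiation under the integral sign\<close>

lemma
  fixes D :: "'b \<Rightarrow> 'a::real_normed_vector \<Rightarrow> 'c::{banach,second_countable_topology}"
  assumes linear: "\<And>x. x \<in> space M \<Longrightarrow> bounded_linear (D x)"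
    and bound: "\<And>x v. x \<in> space M \<Longrightarrow> norm (D x v) \<le> B x * norm v"
    and B: "integrable M B"
    and meas: "\<And>v. (\<lambda>x. D x v) \<in> borel_measurable M"
  shows integrable_bounded_linear_family: "integrable M (\<lambda>x. D x v)"
    and bounded_linear_integral_family: "bounded_linear (\<lambda>v. \<integral>x. D x v \<partial>M)"
proof -
  show int: "integrable M (\<lambda>x. D x v)" for v
    by (rule Bochner_Integration.integrable_bound[where f="\<lambda>x. B x * norm v"])
       (use B meas bound in \<open>auto intro!: AE_I2 intro: order_trans[OF _ abs_ge_self]\<close>)
  show "bounded_linear (\<lambda>v. \<integral>x. D x v \<partial>M)"
  proof (rule bounded_linear_intro[where K="\<integral>x. B x \<partial>M"])
    fix v w
    have "(\<integral>x. D x (v + w) \<partial>M) = (\<integral>x. D x v + D x w \<partial>M)"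
      by (rule Bochner_Integration.integral_cong) (auto simp: linear_simps(1)[OF linear])
    then show "(\<integral>x. D x (v + w) \<partial>M) = (\<integral>x. D x v \<partial>M) + (\<integral>x. D x w \<partial>M)"
      by (simp add: Bochner_Integration.integral_add[OF int int])
    fix c :: real
    have "(\<integral>x. D x (c *\<^sub>R v) \<partial>M) = (\<integral>x. c *\<^sub>R D x v \<partial>M)"
      by (rule Bochner_Integration.integral_cong) (auto simp: linear_simps(5)[OF linear])
    then show "(\<integral>x. D x (c *\<^sub>R v) \<partial>M) = c *\<^sub>R (\<integral>x. D x v \<partial>M)"
      by simp
  next
    fix v
    have "norm (\<integral>x. D x v \<partial>M) \<le> (\<integral>x. norm (D x v) \<partial>M)"
      by (rule integral_norm_bound)
    also have "\<dots> \<le> (\<integral>x. B x * norm v \<partial>M)"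
      by (rule Bochner_Integration.integral_mono[OF integrable_norm[OF int]]) (use B bound in simp_all)
    also have "\<dots> = norm v * (\<integral>x. B x \<partial>M)"
      by simp
    finally show "norm (\<integral>x. D x v \<partial>M) \<le> norm v * (\<integral>x. B x \<partial>M)" .
  qed
qed

lemma tendsto_integral_remainder_quotient:
  fixes \<phi> :: "'a::real_normed_vector \<Rightarrow> 'b \<Rightarrow> 'c::{banach,second_countable_topology}"
  assumes r: "0 < r"
    and deriv: "\<And>x. x \<in> space M \<Longrightarrow> ((\<lambda>u. \<phi> u x) has_derivative D x) (at u0)"
    and lipschitz: "\<And>u x. u \<in> ball u0 r \<Longrightarrow> x \<in> space M \<Longrightarrow> norm (\<phi> u x - \<phi> u0 x) \<le> B x * norm (u - u0)"
    and bound: "\<And>x v. x \<in> space M \<Longrightarrow> norm (D x v) \<le> B x * norm v"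
    and B: "integrable M B"
    and meas: "\<And>u. u \<in> ball u0 r \<Longrightarrow> (\<lambda>x. \<phi> u x) \<in> borel_measurable M"
    and measD: "\<And>v. (\<lambda>x. D x v) \<in> borel_measurable M"
  shows "((\<lambda>h. \<integral>x. norm (\<phi> (u0 + h) x - \<phi> u0 x - D x h) / norm h \<partial>M) \<longlongrightarrow> 0) (at 0)"
proof -
  \<comment> \<open>Cut off at \<open>r\<close> so that \<open>2 B\<close> dominates the whole family, not just small \<open>h\<close>.\<close>
  define R where "R h x = (if norm h < r then norm (\<phi> (u0 + h) x - \<phi> u0 x - D x h) / norm h else 0)"
    for h x
  have "((\<lambda>h. \<integral>x. R h x \<partial>M) \<longlongrightarrow> 0) (at 0)"
    unfolding tendsto_at_iff_sequentially comp_def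
  proof (intro allI impI)
    fix X :: "nat \<Rightarrow> 'a" assume X0: "\<forall>i. X i \<in> UNIV - {0}" and X: "X \<longlonglongrightarrow> 0"
    have "(\<lambda>i. \<integral>x. R (X i) x \<partial>M) \<longlonglongrightarrow> (\<integral>x. 0 \<partial>M)"
    proof (rule integral_dominated_convergence[where w="\<lambda>x. 2 * B x"])
      show "R (X i) \<in> borel_measurable M" for i
      proof (cases "norm (X i) < r")
        case True
        then have "u0 + X i \<in> ball u0 r" by (simp add: dist_norm)
        with True show ?thesis
          using meas[of "u0 + X i"] meas[of u0] measD r unfolding R_def[abs_def] by simp measurable
      qed (simp add: R_def[abs_def])
      show "AE x in M. (\<lambda>i. R (X i) x) \<longlonglongrightarrow> 0"
      proof (rule AE_I2)
        fix x assume x: "x \<in> space M"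
        have "(\<lambda>h. norm (\<phi> (u0 + h) x - \<phi> u0 x - D x h) / norm h) \<midarrow>0\<rightarrow> 0"
          using deriv[OF x] unfolding has_derivative_at by blast
        then have "(\<lambda>i. norm (\<phi> (u0 + X i) x - \<phi> u0 x - D x (X i)) / norm (X i)) \<longlonglongrightarrow> 0"
          unfolding tendsto_at_iff_sequentially comp_def using X X0 by blast
        moreover have "eventually (\<lambda>i. norm (\<phi> (u0 + X i) x - \<phi> u0 x - D x (X i)) / norm (X i)
            = R (X i) x) sequentially"
          using order_tendstoD(2)[OF tendsto_norm_zero[OF X] r] by (rule eventually_mono) (simp add: R_def)
        ultimately show "(\<lambda>i. R (X i) x) \<longlonglongrightarrow> 0"
          by (rule Lim_transform_eventually)
      qed
      show "AE x in M. norm (R (X i) x) \<le> 2 * B x" for i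
      proof (rule AE_I2)
        fix x assume x: "x \<in> space M"
        have "0 \<le> B x * norm (X i)"
          using bound[OF x, of "X i"] by (rule order_trans[OF norm_ge_zero])
        then have "0 \<le> B x"
          using X0 by (simp add: zero_le_mult_iff)
        moreover have "norm (\<phi> (u0 + X i) x - \<phi> u0 x - D x (X i)) \<le> 2 * B x * norm (X i)"
          if "norm (X i) < r"
          using norm_triangle_ineq4[of "\<phi> (u0 + X i) x - \<phi> u0 x" "D x (X i)"]
            lipschitz[OF _ x, of "u0 + X i"] bound[OF x, of "X i"] that
          by (simp add: dist_norm)
        ultimately show "norm (R (X i) x) \<le> 2 * B x"
          using X0 by (auto simp: R_def divide_le_eq)
      qed
    qed (use B in simp_all)
    then show "(\<lambda>i. \<integral>x. R (X i) x \<partial>M) \<longlonglongrightarrow> 0" by simp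
  qed
  moreover have "eventually (\<lambda>h. (\<integral>x. R h x \<partial>M)
      = (\<integral>x. norm (\<phi> (u0 + h) x - \<phi> u0 x - D x h) / norm h \<partial>M)) (at 0)"
    using r by (auto simp: R_def eventually_at dist_norm intro!: exI[of _ r])
  ultimately show ?thesis
    by (simp add: tendsto_cong)
qed

lemma has_derivative_integral:
  fixes \<phi> :: "'a::real_normed_vector \<Rightarrow> 'b \<Rightarrow> 'c::{banach,second_countable_topology}"
  assumes r: "0 < r"
    and deriv: "\<And>u x. u \<in> ball u0 r \<Longrightarrow> x \<in> space M \<Longrightarrow> ((\<lambda>u. \<phi> u x) has_derivative D u x) (at u)"
    and bound: "\<And>u x. u \<in> ball u0 r \<Longrightarrow> x \<in> space M \<Longrightarrow> onorm (D u x) \<le> B x"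
    and B: "integrable M B"
    and meas: "\<And>u. u \<in> ball u0 r \<Longrightarrow> (\<lambda>x. \<phi> u x) \<in> borel_measurable M"
    and measD: "\<And>v. (\<lambda>x. D u0 x v) \<in> borel_measurable M"
    and int0: "integrable M (\<phi> u0)"
  shows "((\<lambda>u. \<integral>x. \<phi> u x \<partial>M) has_derivative (\<lambda>v. \<integral>x. D u0 x v \<partial>M)) (at u0)"
proof -
  have u0: "u0 \<in> ball u0 r" using r by simp
  have linear: "bounded_linear (D u0 x)" if "x \<in> space M" for x
    using deriv[OF u0 that] by (rule has_derivative_bounded_linear)
  have Dbound: "norm (D u0 x v) \<le> B x * norm v" if "x \<in> space M" for x v
    using onorm[OF linear[OF that], of v] bound[OF u0 that] norm_ge_zero[of v]
    by (meson mult_right_mono order_trans)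
  have lipschitz: "norm (\<phi> u x - \<phi> u0 x) \<le> B x * norm (u - u0)"
    if "u \<in> ball u0 r" "x \<in> space M" for u x
    by (rule differentiable_bound[where S="ball u0 r" and f'="\<lambda>u. D u x"])
       (use that u0 deriv bound in \<open>auto intro: has_derivative_at_withinI\<close>)
  note intD = integrable_bounded_linear_family[OF linear Dbound B measD]
  have int: "integrable M (\<phi> u)" if u: "u \<in> ball u0 r" for u
  proof (rule Bochner_Integration.integrable_bound[where f="\<lambda>x. norm (\<phi> u0 x) + B x * norm (u - u0)"])
    show "AE x in M. norm (\<phi> u x) \<le> norm (norm (\<phi> u0 x) + B x * norm (u - u0))"
    proof (rule AE_I2)
      fix x assume "x \<in> space M"
      then show "norm (\<phi> u x) \<le> norm (norm (\<phi> u0 x) + B x * norm (u - u0))"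
        using lipschitz[OF u] norm_triangle_sub[of "\<phi> u x" "\<phi> u0 x"]
          abs_ge_self[of "norm (\<phi> u0 x) + B x * norm (u - u0)"]
        by (simp only: real_norm_def) fastforce
    qed
  qed (use int0 B meas[OF u] in auto)
  have remainder: "norm ((\<integral>x. \<phi> (u0 + h) x \<partial>M) - (\<integral>x. \<phi> u0 x \<partial>M) - (\<integral>x. D u0 x h \<partial>M)) / norm h
      \<le> (\<integral>x. norm (\<phi> (u0 + h) x - \<phi> u0 x - D u0 x h) / norm h \<partial>M)" if "norm h < r" for h
  proof -
    have u: "u0 + h \<in> ball u0 r" using that by (simp add: dist_norm)
    have "(\<integral>x. \<phi> (u0 + h) x \<partial>M) - (\<integral>x. \<phi> u0 x \<partial>M) - (\<integral>x. D u0 x h \<partial>M)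
        = (\<integral>x. \<phi> (u0 + h) x - \<phi> u0 x - D u0 x h \<partial>M)"
      using int[OF u] int0 intD by simp
    then show ?thesis
      by (simp add: integral_norm_bound divide_right_mono)
  qed
  have ev: "eventually (\<lambda>h. norm ((\<integral>x. \<phi> (u0 + h) x \<partial>M) - (\<integral>x. \<phi> u0 x \<partial>M) - (\<integral>x. D u0 x h \<partial>M)) / norm h
      \<le> (\<integral>x. norm (\<phi> (u0 + h) x - \<phi> u0 x - D u0 x h) / norm h \<partial>M)) (at 0)"
    using r remainder by (auto simp: eventually_at dist_norm intro!: exI[of _ r])
  have "((\<lambda>h. norm ((\<integral>x. \<phi> (u0 + h) x \<partial>M) - (\<integral>x. \<phi> u0 x \<partial>M) - (\<integral>x. D u0 x h \<partial>M)) / norm h)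
      \<longlongrightarrow> 0) (at 0)"
    by (rule tendsto_sandwich[OF _ ev tendsto_const
          tendsto_integral_remainder_quotient[OF r deriv[OF u0] lipschitz Dbound B meas measD]]) simp
  then show ?thesis
    unfolding has_derivative_at using bounded_linear_integral_family[OF linear Dbound B measD] by simp
qed

section \<open>The integrand and its derivatives\<close>

definition q_last :: "real^'m::finite \<Rightarrow> real" where
  "q_last u = sqrt (1 - (norm u)\<^sup>2)"

definition q_inner :: "real^'m::finite \<Rightarrow> ('m option \<Rightarrow> real) \<Rightarrow> real" where
  "q_inner u x = u \<bullet> xbar x + q_last u * x None"

definition q_inner_grad :: "real^'m::finite \<Rightarrow> ('m option \<Rightarrow> real) \<Rightarrow> real^'m" where
  "q_inner_grad u x = xbar x - (x None / q_last u) *\<^sub>R u"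

definition q_inner_hess :: "real^'m::finite \<Rightarrow> ('m option \<Rightarrow> real) \<Rightarrow> real^'m \<Rightarrow> real^'m" where
  "q_inner_hess u x v = - ((x None / q_last u) *\<^sub>R v) - (x None * (u \<bullet> v) / q_last u ^ 3) *\<^sub>R u"

definition h_grad :: "real \<Rightarrow> real^'m::finite \<Rightarrow> ('m option \<Rightarrow> real) \<Rightarrow> real^'m" where
  "h_grad \<mu> u x = tanh (q_inner u x / \<mu>) *\<^sub>R q_inner_grad u x"

definition h_hess :: "real \<Rightarrow> real^'m::finite \<Rightarrow> ('m option \<Rightarrow> real) \<Rightarrow> real^'m \<Rightarrow> real^'m" where
  "h_hess \<mu> u x v = ((1 - (tanh (q_inner u x / \<mu>))\<^sup>2) * (q_inner_grad u x \<bullet> v) / \<mu>) *\<^sub>R q_inner_grad u x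
     + tanh (q_inner u x / \<mu>) *\<^sub>R q_inner_hess u x v"

lemma sum_qvec_mult_eq_q_inner: "(\<Sum>i\<in>UNIV. qvec u i * x i) = q_inner u x"
  by (simp add: sum_UNIV_option qvec_def q_inner_def inner_xbar q_last_def add.commute)

lemma q_last_pos: "norm u < 1 \<Longrightarrow> 0 < q_last u"
  unfolding q_last_def by (simp add: abs_square_less_1)

lemma q_last_le_1: "q_last u \<le> 1"
  unfolding q_last_def by simp

lemma q_last_ge_half:
  assumes "norm u \<le> 1/2"
  shows "1/2 \<le> q_last u"
proof -
  have "(norm u)\<^sup>2 \<le> (1/2)\<^sup>2" using assms by (intro power_mono) auto
  then have "sqrt (1/4) \<le> q_last u"
    unfolding q_last_def by (intro real_sqrt_le_mono) (simp add: power_divide)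
  then show ?thesis by (simp add: real_sqrt_divide)
qed

lemma q_last_inverse_bounds:
  assumes "norm u \<le> 1/2"
  shows "1 / q_last u \<le> 2" and "1 / q_last u ^ 3 \<le> 8"
proof -
  have q: "1/2 \<le> q_last u" by (rule q_last_ge_half[OF assms])
  then show "1 / q_last u \<le> 2" by (simp add: divide_le_eq)
  have "(1/2)^3 \<le> q_last u ^ 3" using q by (intro power_mono) auto
  then show "1 / q_last u ^ 3 \<le> 8"
    using q by (simp add: divide_le_eq power_divide)
qed

lemma has_derivative_q_last:
  assumes "norm u < 1"
  shows "(q_last has_derivative (\<lambda>v. - (u \<bullet> v) / q_last u)) (at u)"
proof -
  have q: "q_last = (\<lambda>u. sqrt (1 - u \<bullet> u))"
    by (rule ext) (simp add: q_last_def power2_norm_eq_inner)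
  have "0 < 1 - u \<bullet> u"
    using assms by (simp add: power2_norm_eq_inner[symmetric] abs_square_less_1)
  from has_derivative_real_sqrt[OF this
      has_derivative_diff[OF has_derivative_const has_derivative_inner[OF has_derivative_ident has_derivative_ident]]]
  show ?thesis
    unfolding q by (simp add: inner_commute field_simps)
qed

lemma has_derivative_q_inner:
  assumes "norm u < 1"
  shows "((\<lambda>u. q_inner u x) has_derivative (\<lambda>v. q_inner_grad u x \<bullet> v)) (at u)"
proof -
  have "((\<lambda>u. u \<bullet> xbar x + q_last u * x None) has_derivative
      (\<lambda>v. v \<bullet> xbar x + (- (u \<bullet> v) / q_last u) * x None)) (at u)"
    by (intro has_derivative_add has_derivative_inner_left has_derivative_ident
        has_derivative_mult_left has_derivative_q_last assms)
  then show ?thesis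
    unfolding q_inner_def[abs_def]
    by (simp add: q_inner_grad_def inner_diff_left algebra_simps inner_commute)
qed

lemma has_derivative_q_inner_grad:
  assumes "norm u < 1"
  shows "((\<lambda>u. q_inner_grad u x) has_derivative q_inner_hess u x) (at u)"
proof -
  have q: "q_last u \<noteq> 0" using q_last_pos[OF assms] by simp
  have "((\<lambda>u. x None / q_last u) has_derivative (\<lambda>h. (0 * q_last u - x None * (- (u \<bullet> h) / q_last u))
      / (q_last u * q_last u))) (at u)"
    by (rule has_derivative_divide'[OF has_derivative_const has_derivative_q_last[OF assms] q])
  from has_derivative_diff[OF has_derivative_const has_derivative_scaleR[OF this has_derivative_ident]]
  show ?thesis
    unfolding q_inner_grad_def[abs_def] q_inner_hess_def[abs_def]
    using q by (simp add: power3_eq_cube field_simps)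
qed

lemma has_real_derivative_h_mu:
  assumes "\<mu> \<noteq> 0"
  shows "(h_mu \<mu> has_real_derivative tanh (z / \<mu>)) (at z)"
proof -
  have "((\<lambda>z. z / \<mu>) has_real_derivative 1 / \<mu>) (at z)"
    using DERIV_cdivide[OF DERIV_ident, of \<mu>] by simp
  from DERIV_cmult[OF DERIV_chain2[OF DERIV_ln_divide has_field_derivative_cosh[OF this]], of \<mu>]
  show ?thesis
    unfolding h_mu_def[abs_def] using assms by (simp add: tanh_def field_simps)
qed

lemma has_derivative_h_mu_q_inner:
  assumes "norm u < 1" "\<mu> \<noteq> 0"
  shows "((\<lambda>u. h_mu \<mu> (q_inner u x)) has_derivative (\<lambda>v. h_grad \<mu> u x \<bullet> v)) (at u)"
  using DERIV_compose_FDERIV[OF has_real_derivative_h_mu[OF assms(2)] has_derivative_q_inner[OF assms(1)]]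
  by (simp add: h_grad_def mult.commute)

lemma has_derivative_h_grad:
  assumes "norm u < 1" "\<mu> \<noteq> 0"
  shows "((\<lambda>u. h_grad \<mu> u x) has_derivative h_hess \<mu> u x) (at u)"
proof -
  have "((\<lambda>u. q_inner u x / \<mu>) has_derivative (\<lambda>v. (q_inner_grad u x \<bullet> v) / \<mu>)) (at u)"
    using has_derivative_divide'[OF has_derivative_q_inner[OF assms(1)] has_derivative_const, of \<mu>] assms(2)
    by simp
  from DERIV_compose_FDERIV[OF has_field_derivative_tanh[OF _ DERIV_ident] this]
  have "((\<lambda>u. tanh (q_inner u x / \<mu>)) has_derivative
      (\<lambda>v. (q_inner_grad u x \<bullet> v) / \<mu> * (1 - (tanh (q_inner u x / \<mu>))\<^sup>2))) (at u)"
    by simp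
  from has_derivative_scaleR[OF this has_derivative_q_inner_grad[OF assms(1), of x]]
  show ?thesis
    unfolding h_grad_def[abs_def] h_hess_def[abs_def] by (simp add: ac_simps)
qed

lemma borel_measurable_vec_lambda [measurable]:
  fixes f :: "'a \<Rightarrow> 'n::finite \<Rightarrow> real"
  assumes "\<And>j. (\<lambda>x. f x j) \<in> borel_measurable M"
  shows "(\<lambda>x. \<chi> j. f x j) \<in> borel_measurable M"
proof (subst borel_measurable_euclidean_space, intro ballI)
  fix b :: "real^'n" assume "b \<in> Basis"
  then obtain i where b: "b = axis i 1" by (auto simp: Basis_vec_def)
  show "(\<lambda>x. (\<chi> j. f x j) \<bullet> b) \<in> borel_measurable M"
    unfolding b inner_axis using assms[of i] by simp
qed

lemma borel_measurable_cosh [measurable]: "(cosh :: real \<Rightarrow> real) \<in> borel_measurable borel"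
  by (rule borel_measurable_continuous_onI) (intro continuous_intros)

lemma borel_measurable_tanh [measurable]: "(tanh :: real \<Rightarrow> real) \<in> borel_measurable borel"
  by (rule borel_measurable_continuous_onI) (intro continuous_intros, simp)

lemma borel_measurable_h_mu_q_inner [measurable]:
  "(\<lambda>x. h_mu \<mu> (q_inner u x)) \<in> borel_measurable (BG_iid \<theta> :: ('m::finite option \<Rightarrow> real) measure)"
  unfolding h_mu_def q_inner_def xbar_def by measurable

lemma borel_measurable_h_grad [measurable]:
  "h_grad \<mu> u \<in> borel_measurable (BG_iid \<theta> :: ('m::finite option \<Rightarrow> real) measure)"
  unfolding h_grad_def[abs_def] q_inner_grad_def q_inner_def xbar_def by measurable

lemma borel_measurable_h_hess [measurable]:
  "(\<lambda>x. h_hess \<mu> u x v) \<in> borel_measurable (BG_iid \<theta> :: ('m::finite option \<Rightarrow> real) measure)"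
  unfolding h_hess_def q_inner_hess_def q_inner_grad_def q_inner_def xbar_def by measurable

definition l1_norm :: "('i::finite \<Rightarrow> real) \<Rightarrow> real" where
  "l1_norm x = (\<Sum>i\<in>UNIV. \<bar>x i\<bar>)"

lemma l1_norm_nonneg: "0 \<le> l1_norm x"
  unfolding l1_norm_def by (simp add: sum_nonneg)

lemma abs_le_l1_norm: "\<bar>x i\<bar> \<le> l1_norm x"
  unfolding l1_norm_def by (rule member_le_sum) auto

lemma norm_xbar_le_l1_norm: "norm (xbar x) \<le> l1_norm x"
proof -
  have "norm (xbar x) \<le> (\<Sum>j\<in>UNIV. \<bar>xbar x $ j\<bar>)" by (rule norm_le_l1_cart)
  also have "\<dots> \<le> l1_norm x" unfolding l1_norm_def sum_UNIV_option by (simp add: xbar_def)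
  finally show ?thesis .
qed

lemma
  assumes "0 \<le> \<theta>" "\<theta> \<le> 1"
  shows integrable_BG_iid_l1_norm: "integrable (BG_iid \<theta>) (l1_norm :: ('i::finite \<Rightarrow> real) \<Rightarrow> real)"
    and integrable_BG_iid_l1_norm_squared: "integrable (BG_iid \<theta>) (\<lambda>x::'i \<Rightarrow> real. (l1_norm x)\<^sup>2)"
proof -
  have "(\<lambda>x::'i \<Rightarrow> real. (l1_norm x)\<^sup>2) = (\<lambda>x. \<Sum>i\<in>UNIV. \<Sum>j\<in>UNIV. \<Prod>k\<leftarrow>[i, j]. \<bar>x k\<bar>)"
    by (rule ext) (simp add: l1_norm_def power2_eq_square sum_product)
  then show "integrable (BG_iid \<theta>) (\<lambda>x::'i \<Rightarrow> real. (l1_norm x)\<^sup>2)"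
    by (simp only:) (intro Bochner_Integration.integrable_sum integrable_BG_iid_prod_list_abs[OF assms])
  show "integrable (BG_iid \<theta>) (l1_norm :: ('i \<Rightarrow> real) \<Rightarrow> real)"
    using integrable_BG_iid_prod_list_abs[OF assms, of "[_]"]
    unfolding l1_norm_def[abs_def] by (intro Bochner_Integration.integrable_sum) simp
qed

lemma norm_q_inner_grad_le:
  assumes "norm u \<le> 1" "0 < q_last u"
  shows "norm (q_inner_grad u x) \<le> (1 + 1 / q_last u) * l1_norm x"
proof -
  have "norm (q_inner_grad u x) \<le> norm (xbar x) + norm ((x None / q_last u) *\<^sub>R u)"
    unfolding q_inner_grad_def by (rule norm_triangle_ineq4)
  also have "norm ((x None / q_last u) *\<^sub>R u) = \<bar>x None\<bar> / q_last u * norm u"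
    using assms by (simp add: abs_div)
  also have "\<dots> \<le> l1_norm x / q_last u * 1"
    using assms abs_le_l1_norm[of x None] by (intro mult_mono divide_right_mono) auto
  finally show ?thesis
    using norm_xbar_le_l1_norm[of x] by (simp add: algebra_simps)
qed

lemma norm_h_grad_le:
  assumes "norm u \<le> 1" "0 < q_last u"
  shows "norm (h_grad \<mu> u x) \<le> (1 + 1 / q_last u) * l1_norm x"
proof -
  have "\<bar>tanh (q_inner u x / \<mu>)\<bar> \<le> 1" using tanh_real_bounds[of "q_inner u x / \<mu>"] by auto
  then have "\<bar>tanh (q_inner u x / \<mu>)\<bar> * norm (q_inner_grad u x) \<le> 1 * norm (q_inner_grad u x)"
    by (intro mult_right_mono) auto
  then show ?thesis
    unfolding h_grad_def norm_scaleR real_norm_def using norm_q_inner_grad_le[OF assms, of x] by linarith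
qed

lemma norm_q_inner_hess_le:
  assumes u: "norm u \<le> 1/2"
  shows "norm (q_inner_hess u x v) \<le> 4 * \<bar>x None\<bar> * norm v"
proof -
  note q = q_last_inverse_bounds[OF u]
  have pos: "0 < q_last u" using q_last_ge_half[OF u] by simp
  have "norm ((x None / q_last u) *\<^sub>R v) = \<bar>x None\<bar> * (1 / q_last u) * norm v"
    using pos by (simp add: abs_div)
  also have "\<dots> \<le> \<bar>x None\<bar> * 2 * norm v"
    using q(1) by (intro mult_right_mono mult_left_mono) auto
  finally have first: "norm ((x None / q_last u) *\<^sub>R v) \<le> 2 * \<bar>x None\<bar> * norm v" by simp
  have "norm ((x None * (u \<bullet> v) / q_last u ^ 3) *\<^sub>R u) = \<bar>x None\<bar> * \<bar>u \<bullet> v\<bar> * (1 / q_last u ^ 3) * norm u"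
    using pos by (simp add: abs_mult abs_div)
  also have "\<dots> \<le> \<bar>x None\<bar> * (norm u * norm v) * 8 * (1/2)"
    using q(2) u pos by (intro mult_mono Cauchy_Schwarz_ineq2 mult_left_mono) auto
  also have "\<dots> \<le> \<bar>x None\<bar> * ((1/2) * norm v) * 8 * (1/2)"
    using u by (intro mult_mono mult_right_mono mult_left_mono) auto
  finally have second: "norm ((x None * (u \<bullet> v) / q_last u ^ 3) *\<^sub>R u) \<le> \<bar>x None\<bar> * ((1/2) * norm v) * 8 * (1/2)" .
  have "norm (q_inner_hess u x v) \<le> norm ((x None / q_last u) *\<^sub>R v) + norm ((x None * (u \<bullet> v) / q_last u ^ 3) *\<^sub>R u)"
    unfolding q_inner_hess_def by (metis norm_minus_cancel norm_triangle_ineq4)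
  with first second show ?thesis by linarith
qed

lemma norm_h_hess_le:
  assumes u: "norm u \<le> 1/2" and mu: "0 < \<mu>"
  shows "norm (h_hess \<mu> u x v) \<le> (9 / \<mu> * (l1_norm x)\<^sup>2 + 4 * l1_norm x) * norm v"
proof -
  define t where "t = tanh (q_inner u x / \<mu>)"
  have t: "\<bar>t\<bar> \<le> 1" using tanh_real_bounds[of "q_inner u x / \<mu>"] unfolding t_def by auto
  then have t2: "\<bar>1 - t\<^sup>2\<bar> \<le> 1" by (simp add: abs_le_iff abs_square_le_1)
  have "norm (q_inner_grad u x) \<le> (1 + 1 / q_last u) * l1_norm x"
    using u q_last_ge_half[OF u] by (intro norm_q_inner_grad_le) auto
  also have "\<dots> \<le> 3 * l1_norm x"
    using q_last_inverse_bounds(1)[OF u] l1_norm_nonneg[of x] by (intro mult_right_mono) auto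
  finally have g: "norm (q_inner_grad u x) \<le> 3 * l1_norm x" .
  have "norm (((1 - t\<^sup>2) * (q_inner_grad u x \<bullet> v) / \<mu>) *\<^sub>R q_inner_grad u x)
      = \<bar>1 - t\<^sup>2\<bar> * \<bar>q_inner_grad u x \<bullet> v\<bar> / \<mu> * norm (q_inner_grad u x)"
    using mu by (simp add: abs_mult)
  also have "\<dots> \<le> 1 * (norm (q_inner_grad u x) * norm v) / \<mu> * norm (q_inner_grad u x)"
    using t2 mu by (intro mult_right_mono divide_right_mono mult_mono Cauchy_Schwarz_ineq2) auto
  also have "\<dots> = (norm (q_inner_grad u x))\<^sup>2 * norm v / \<mu>"
    by (simp add: power2_eq_square)
  also have "\<dots> \<le> (3 * l1_norm x)\<^sup>2 * norm v / \<mu>"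
    using g mu by (intro divide_right_mono mult_right_mono power_mono) auto
  finally have first: "norm (((1 - t\<^sup>2) * (q_inner_grad u x \<bullet> v) / \<mu>) *\<^sub>R q_inner_grad u x)
      \<le> 9 / \<mu> * (l1_norm x)\<^sup>2 * norm v"
    by (simp add: power_mult_distrib)
  have "norm (t *\<^sub>R q_inner_hess u x v) \<le> 1 * (4 * \<bar>x None\<bar> * norm v)"
    using t norm_q_inner_hess_le[OF u] by (simp only: norm_scaleR) (intro mult_mono, auto)
  also have "\<dots> \<le> 4 * l1_norm x * norm v"
    using abs_le_l1_norm[of x None] by (simp add: mult_right_mono)
  finally have second: "norm (t *\<^sub>R q_inner_hess u x v) \<le> 4 * l1_norm x * norm v" .
  have "norm (h_hess \<mu> u x v) \<le> norm (((1 - t\<^sup>2) * (q_inner_grad u x \<bullet> v) / \<mu>) *\<^sub>R q_inner_grad u x)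
      + norm (t *\<^sub>R q_inner_hess u x v)"
    unfolding h_hess_def t_def[symmetric] by (rule norm_triangle_ineq)
  with first second show ?thesis by (simp add: algebra_simps)
qed

lemma ln_cosh_le_abs: "ln (cosh y) \<le> \<bar>y::real\<bar>"
proof -
  have "exp (- \<bar>y\<bar>) \<le> exp \<bar>y\<bar>" by simp
  then have "cosh y \<le> exp \<bar>y\<bar>"
    by (cases "y \<ge> 0") (simp_all add: cosh_field_def)
  then have "ln (cosh y) \<le> ln (exp \<bar>y\<bar>)" by (subst ln_le_cancel_iff) auto
  then show ?thesis by simp
qed

lemma abs_h_mu_le:
  assumes "0 < \<mu>"
  shows "\<bar>h_mu \<mu> z\<bar> \<le> \<bar>z\<bar>"
proof -
  have "0 \<le> ln (cosh (z / \<mu>))" using cosh_real_ge_1 by simp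
  moreover have "ln (cosh (z / \<mu>)) \<le> \<bar>z\<bar> / \<mu>"
    using ln_cosh_le_abs[of "z / \<mu>"] assms by (simp add: abs_div)
  ultimately show ?thesis
    using assms unfolding h_mu_def by (simp add: abs_mult field_simps)
qed

lemma abs_q_inner_le:
  assumes "norm u \<le> 1"
  shows "\<bar>q_inner u x\<bar> \<le> 2 * l1_norm x"
proof -
  have "\<bar>u \<bullet> xbar x\<bar> \<le> norm u * norm (xbar x)" by (rule Cauchy_Schwarz_ineq2)
  also have "\<dots> \<le> 1 * l1_norm x" using assms norm_xbar_le_l1_norm[of x] by (intro mult_mono) auto
  moreover have "\<bar>q_last u\<bar> \<le> 1"
    using q_last_le_1[of u] assms by (simp add: q_last_def power_le_one)
  then have "\<bar>q_last u * x None\<bar> \<le> 1 * l1_norm x"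
    using abs_le_l1_norm[of x None] unfolding abs_mult by (intro mult_mono) auto
  ultimately show ?thesis
    unfolding q_inner_def by linarith
qed

lemma integrable_h_mu_q_inner:
  assumes th: "0 \<le> \<theta>" "\<theta> \<le> 1" and "norm u \<le> 1" "0 < \<mu>"
  shows "integrable (BG_iid \<theta>) (\<lambda>x::'m::finite option \<Rightarrow> real. h_mu \<mu> (q_inner u x))"
proof (rule Bochner_Integration.integrable_bound[where f="\<lambda>x. 2 * l1_norm x"])
  show "AE x in BG_iid \<theta>. norm (h_mu \<mu> (q_inner u x)) \<le> norm (2 * l1_norm x)"
  proof (rule AE_I2)
    fix x :: "'m option \<Rightarrow> real"
    show "norm (h_mu \<mu> (q_inner u x)) \<le> norm (2 * l1_norm x)"
      using abs_h_mu_le[OF \<open>0 < \<mu>\<close>, of "q_inner u x"] abs_q_inner_le[OF \<open>norm u \<le> 1\<close>, of x] by simp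
  qed
qed (use integrable_BG_iid_l1_norm[OF th] in auto)

lemma integrable_h_grad:
  assumes th: "0 \<le> \<theta>" "\<theta> \<le> 1" and u: "norm u < 1"
  shows "integrable (BG_iid \<theta>) (h_grad \<mu> u :: ('m::finite option \<Rightarrow> real) \<Rightarrow> real^'m)"
proof (rule Bochner_Integration.integrable_bound[where f="\<lambda>x. (1 + 1 / q_last u) * l1_norm x"])
  show "AE x in BG_iid \<theta>. norm (h_grad \<mu> u x) \<le> norm ((1 + 1 / q_last u) * l1_norm x)"
  proof (rule AE_I2)
    fix x :: "'m option \<Rightarrow> real"
    have "norm (h_grad \<mu> u x) \<le> (1 + 1 / q_last u) * l1_norm x"
      using u q_last_pos[OF u] by (intro norm_h_grad_le) auto
    then show "norm (h_grad \<mu> u x) \<le> norm ((1 + 1 / q_last u) * l1_norm x)" by simp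
  qed
qed (use integrable_BG_iid_l1_norm[OF th] in auto)

lemma obj_eq_integral_h_mu_q_inner: "obj \<theta> \<mu> = (\<lambda>u. \<integral>x. h_mu \<mu> (q_inner u x) \<partial>BG_iid \<theta>)"
  by (rule ext) (simp add: obj_def sum_qvec_mult_eq_q_inner)

lemma obj_has_derivative:
  assumes th: "0 \<le> \<theta>" "\<theta> \<le> 1" and u0: "norm u0 < 1" and mu: "0 < \<mu>"
  shows "(obj \<theta> \<mu> has_derivative
    (\<lambda>v. (\<integral>x. h_grad \<mu> u0 x \<partial>(BG_iid \<theta> :: ('m::finite option \<Rightarrow> real) measure)) \<bullet> v)) (at u0)"
proof -
  define r where "r = (1 - norm u0) / 2"
  define c where "c = sqrt (1 - (norm u0 + r)\<^sup>2)"
  have r: "0 < r" using u0 by (simp add: r_def)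
  have rho: "0 \<le> norm u0 + r" "norm u0 + r < 1"
    using u0 unfolding r_def by (simp_all add: field_simps)
  then have c: "0 < c"
    unfolding c_def by (simp add: abs_square_less_1)
  have in_ball: "norm u < 1 \<and> c \<le> q_last u" if "u \<in> ball u0 r" for u :: "real^'m"
  proof -
    have "norm u < norm u0 + r"
      using that norm_triangle_sub[of u u0] by (simp add: dist_norm norm_minus_commute)
    moreover note rho(2)
    ultimately show ?thesis
      unfolding c_def q_last_def by (auto intro!: power_mono)
  qed
  have "((\<lambda>u. \<integral>x. h_mu \<mu> (q_inner u x) \<partial>BG_iid \<theta>) has_derivative
      (\<lambda>v. \<integral>x. h_grad \<mu> u0 x \<bullet> v \<partial>(BG_iid \<theta> :: ('m option \<Rightarrow> real) measure))) (at u0)"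
  proof (rule has_derivative_integral[where r=r and B="\<lambda>x. (1 + 1 / c) * l1_norm x"])
    fix u and x :: "'m option \<Rightarrow> real" assume u: "u \<in> ball u0 r"
    show "((\<lambda>u. h_mu \<mu> (q_inner u x)) has_derivative (\<lambda>v. h_grad \<mu> u x \<bullet> v)) (at u)"
      using in_ball[OF u] mu by (intro has_derivative_h_mu_q_inner) auto
    have "norm (h_grad \<mu> u x) \<le> (1 + 1 / q_last u) * l1_norm x"
      using in_ball[OF u] c by (intro norm_h_grad_le) auto
    also have "\<dots> \<le> (1 + 1 / c) * l1_norm x"
      using in_ball[OF u] c l1_norm_nonneg[of x]
      by (intro mult_right_mono add_left_mono divide_left_mono) auto
    finally show "onorm (\<lambda>v. h_grad \<mu> u x \<bullet> v) \<le> (1 + 1 / c) * l1_norm x"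
      using onorm_inner_right[OF bounded_linear_ident, of "h_grad \<mu> u x"] by (simp add: onorm_id)
  qed (use r u0 integrable_BG_iid_l1_norm[OF th] integrable_h_mu_q_inner[OF th less_imp_le[OF u0] mu] in auto)
  moreover have "(\<lambda>v. \<integral>x. h_grad \<mu> u0 x \<bullet> v \<partial>BG_iid \<theta>) = (\<lambda>v. (\<integral>x. h_grad \<mu> u0 x \<partial>BG_iid \<theta>) \<bullet> v)"
    using integrable_h_grad[OF th u0] by (intro ext integral_inner_left) auto
  ultimately show ?thesis
    unfolding obj_eq_integral_h_mu_q_inner by simp
qed

lemma
  assumes th: "0 \<le> \<theta>" "\<theta> \<le> 1" and w: "norm w \<le> 1/4" and mu: "0 < \<mu>"
  shows integrable_h_hess: "integrable (BG_iid \<theta>) (\<lambda>x::'m::finite option \<Rightarrow> real. h_hess \<mu> w x v)"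
    and integral_h_grad_has_derivative: "((\<lambda>u. \<integral>x. h_grad \<mu> u x \<partial>(BG_iid \<theta> :: ('m option \<Rightarrow> real) measure))
      has_derivative (\<lambda>v. \<integral>x. h_hess \<mu> w x v \<partial>BG_iid \<theta>)) (at w)"
proof -
  define B where "B x = 9 / \<mu> * (l1_norm x)\<^sup>2 + 4 * l1_norm x" for x :: "'m option \<Rightarrow> real"
  have B: "integrable (BG_iid \<theta>) B"
    unfolding B_def[abs_def] using integrable_BG_iid_l1_norm[OF th] integrable_BG_iid_l1_norm_squared[OF th]
    by (intro Bochner_Integration.integrable_add Bochner_Integration.integrable_mult_right)
  have in_ball: "norm u \<le> 1/2" if "u \<in> ball w (1/4)" for u :: "real^'m"
    using that w norm_triangle_sub[of u w] by (simp add: dist_norm norm_minus_commute)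
  have deriv: "((\<lambda>u. h_grad \<mu> u x) has_derivative h_hess \<mu> u x) (at u)" if "norm u \<le> 1/2" for u x
    using that mu by (intro has_derivative_h_grad) auto
  have bound: "norm (h_hess \<mu> u x v) \<le> B x * norm v" if "norm u \<le> 1/2" for u x v
    unfolding B_def by (rule norm_h_hess_le[OF that mu])
  have w2: "norm w \<le> 1/2" using w by simp
  show "integrable (BG_iid \<theta>) (\<lambda>x::'m option \<Rightarrow> real. h_hess \<mu> w x v)"
    by (rule integrable_bounded_linear_family[where B=B,
          OF has_derivative_bounded_linear[OF deriv[OF w2]] bound[OF w2] B borel_measurable_h_hess])
  show "((\<lambda>u. \<integral>x. h_grad \<mu> u x \<partial>(BG_iid \<theta> :: ('m option \<Rightarrow> real) measure))
      has_derivative (\<lambda>v. \<integral>x. h_hess \<mu> w x v \<partial>BG_iid \<theta>)) (at w)"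
  proof (rule has_derivative_integral[where r="1/4" and B=B])
    fix u and x :: "'m option \<Rightarrow> real" assume u: "u \<in> ball w (1/4)"
    show "((\<lambda>u. h_grad \<mu> u x) has_derivative h_hess \<mu> u x) (at u)"
      by (rule deriv[OF in_ball[OF u]])
    show "onorm (h_hess \<mu> u x) \<le> B x"
      by (rule onorm_le) (rule bound[OF in_ball[OF u]])
  next
    show "integrable (BG_iid \<theta>) (h_grad \<mu> w)"
      using w by (intro integrable_h_grad[OF th]) simp
  qed (simp_all add: B)
qed

section \<open>Lower bound on the Hessian\<close>

lemma abs_tanh_le_abs: "\<bar>tanh y\<bar> \<le> \<bar>y::real\<bar>"
proof -
  have "tanh y \<le> y" if "0 \<le> y" for y :: real
  proof -
    have "(\<lambda>y. y - tanh y) 0 \<le> (\<lambda>y. y - tanh y) y"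
    proof (rule DERIV_nonneg_imp_nondecreasing[OF that])
      fix x :: real
      have "((\<lambda>y. y - tanh y) has_real_derivative 1 - (1 - (tanh x)\<^sup>2) * 1) (at x)"
        by (intro DERIV_diff DERIV_ident has_field_derivative_tanh) simp_all
      then show "\<exists>d. ((\<lambda>y. y - tanh y) has_real_derivative d) (at x) \<and> 0 \<le> d" by force
    qed
    then show ?thesis by simp
  qed
  from this[of y] this[of "- y"] show ?thesis
    by (cases "y \<ge> 0") auto
qed

lemma inner_h_hess:
  "v \<bullet> h_hess \<mu> u x v = (1 - (tanh (q_inner u x / \<mu>))\<^sup>2) * (q_inner_grad u x \<bullet> v)\<^sup>2 / \<mu>
    + tanh (q_inner u x / \<mu>) * (v \<bullet> q_inner_hess u x v)"
  by (simp add: h_hess_def inner_add_right inner_commute power2_eq_square)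

lemma abs_inner_q_inner_hess_le:
  assumes u: "norm u \<le> 1/4"
  shows "\<bar>v \<bullet> q_inner_hess u x v\<bar> \<le> 3 * \<bar>x None\<bar> * (v \<bullet> v)"
proof -
  have u2: "norm u \<le> 1/2" using u by simp
  note q = q_last_inverse_bounds[OF u2]
  have pos: "0 < q_last u" using q_last_ge_half[OF u2] by simp
  have "(u \<bullet> v)\<^sup>2 \<le> (norm u * norm v)\<^sup>2"
    using Cauchy_Schwarz_ineq2[of u v] by (metis abs_ge_zero power2_abs power_mono)
  also have "\<dots> \<le> ((1/4) * norm v)\<^sup>2"
    using u by (intro power_mono mult_right_mono) auto
  also have "\<dots> = (1/16) * (v \<bullet> v)"
    by (simp add: power_mult_distrib power2_norm_eq_inner power_divide)
  finally have uv: "(u \<bullet> v)\<^sup>2 \<le> (1/16) * (v \<bullet> v)" .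
  have "\<bar>x None * (v \<bullet> v) / q_last u\<bar> = \<bar>x None\<bar> * (v \<bullet> v) * (1 / q_last u)"
    using pos by (simp add: abs_mult)
  also have "\<dots> \<le> \<bar>x None\<bar> * (v \<bullet> v) * 2"
    using q(1) by (intro mult_left_mono) auto
  finally have first: "\<bar>x None * (v \<bullet> v) / q_last u\<bar> \<le> \<bar>x None\<bar> * (v \<bullet> v) * 2" .
  have "\<bar>x None * (u \<bullet> v)\<^sup>2 / q_last u ^ 3\<bar> = \<bar>x None\<bar> * (u \<bullet> v)\<^sup>2 * (1 / q_last u ^ 3)"
    using pos by (simp add: abs_mult)
  also have "\<dots> \<le> \<bar>x None\<bar> * ((1/16) * (v \<bullet> v)) * 8"
    using uv q(2) pos by (intro mult_mono mult_left_mono) auto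
  finally have second: "\<bar>x None * (u \<bullet> v)\<^sup>2 / q_last u ^ 3\<bar> \<le> \<bar>x None\<bar> * (v \<bullet> v) / 2" by simp
  have "v \<bullet> q_inner_hess u x v = - (x None * (v \<bullet> v) / q_last u + x None * (u \<bullet> v)\<^sup>2 / q_last u ^ 3)"
    by (simp add: q_inner_hess_def inner_diff_right inner_commute power2_eq_square)
  then have "\<bar>v \<bullet> q_inner_hess u x v\<bar> \<le> \<bar>x None * (v \<bullet> v) / q_last u\<bar> + \<bar>x None * (u \<bullet> v)\<^sup>2 / q_last u ^ 3\<bar>"
    by (simp only: abs_minus_cancel abs_triangle_ineq)
  moreover have "0 \<le> \<bar>x None\<bar> * (v \<bullet> v)" by simp
  ultimately show ?thesis
    using first second by linarith
qed

lemma inner_h_hess_ge: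
  assumes u: "norm u \<le> 1/4" and mu: "0 < \<mu>"
  shows "- 3 * \<bar>x None\<bar> * (v \<bullet> v) \<le> v \<bullet> h_hess \<mu> u x v"
proof -
  define t where "t = tanh (q_inner u x / \<mu>)"
  have t: "\<bar>t\<bar> \<le> 1" using tanh_real_bounds[of "q_inner u x / \<mu>"] unfolding t_def by auto
  then have "0 \<le> (1 - t\<^sup>2) * (q_inner_grad u x \<bullet> v)\<^sup>2 / \<mu>"
    using mu by (simp add: abs_square_le_1)
  moreover have "\<bar>t * (v \<bullet> q_inner_hess u x v)\<bar> \<le> 1 * (3 * \<bar>x None\<bar> * (v \<bullet> v))"
    unfolding abs_mult using t abs_inner_q_inner_hess_le[OF u] by (intro mult_mono) auto
  ultimately show ?thesis
    unfolding inner_h_hess t_def[symmetric] by linarith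
qed

lemma inner_h_hess_ge_of_None_eq_0:
  assumes x: "x None = 0" and mu: "0 < \<mu>"
  shows "(1 - (u \<bullet> xbar x / \<mu>)\<^sup>2) * (v \<bullet> xbar x)\<^sup>2 / \<mu> \<le> v \<bullet> h_hess \<mu> u x v"
proof -
  have "(tanh (u \<bullet> xbar x / \<mu>))\<^sup>2 \<le> (u \<bullet> xbar x / \<mu>)\<^sup>2"
    using abs_tanh_le_abs by (metis abs_ge_zero power2_abs power_mono)
  then have "(1 - (u \<bullet> xbar x / \<mu>)\<^sup>2) * (v \<bullet> xbar x)\<^sup>2 / \<mu> \<le> (1 - (tanh (u \<bullet> xbar x / \<mu>))\<^sup>2) * (v \<bullet> xbar x)\<^sup>2 / \<mu>"
    using mu by (intro divide_right_mono mult_right_mono) auto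
  also have "\<dots> = v \<bullet> h_hess \<mu> u x v"
    using x by (simp add: inner_h_hess q_inner_def q_inner_grad_def q_inner_hess_def inner_commute)
  finally show ?thesis .
qed

lemma inner_h_hess_ge_pointwise:
  assumes "norm u \<le> 1/4" and mu: "0 < \<mu>"
  shows "indicator {0} (x None) * (v \<bullet> xbar x)\<^sup>2 / \<mu>
      - indicator {0} (x None) * ((u \<bullet> xbar x)\<^sup>2 * (v \<bullet> xbar x)\<^sup>2) / \<mu> ^ 3
      - 3 * (v \<bullet> v) * \<bar>x None\<bar> \<le> v \<bullet> h_hess \<mu> u x v"
proof (cases "x None = 0")
  case True
  have "(v \<bullet> xbar x)\<^sup>2 / \<mu> - (u \<bullet> xbar x)\<^sup>2 * (v \<bullet> xbar x)\<^sup>2 / \<mu> ^ 3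
      = (1 - (u \<bullet> xbar x / \<mu>)\<^sup>2) * (v \<bullet> xbar x)\<^sup>2 / \<mu>"
    using mu by (simp add: field_simps power2_eq_square power3_eq_cube)
  with inner_h_hess_ge_of_None_eq_0[where x=x and \<mu>=\<mu> and u=u and v=v] True mu show ?thesis
    by simp
next
  case False
  with inner_h_hess_ge[OF assms, of x v] show ?thesis by (simp add: mult_ac)
qed

lemma
  assumes "0 \<le> \<theta>" "\<theta> \<le> 1"
  shows integrable_BG_iid_abs_component: "integrable (BG_iid \<theta>) (\<lambda>x::'i::finite \<Rightarrow> real. \<bar>x i\<bar>)"
    and integral_BG_iid_abs_component_le: "(\<integral>x. \<bar>x i\<bar> \<partial>(BG_iid \<theta> :: ('i \<Rightarrow> real) measure)) \<le> \<theta>"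
proof -
  define f :: "'i \<Rightarrow> real \<Rightarrow> real" where "f j y = (if j = i then \<bar>y\<bar> else 1)" for j y
  interpret B: prob_space "BG \<theta>" by (rule prob_space_BG[OF assms])
  have f: "integrable (BG \<theta>) (f j)" for j
    using integrable_BG_abs_power[OF assms, of 1] by (cases "j = i") (auto simp: f_def[abs_def])
  have eq: "\<bar>x i\<bar> = (\<Prod>j\<in>UNIV. f j (x j))" for x :: "'i \<Rightarrow> real"
    by (simp add: f_def prod.If_cases)
  show "integrable (BG_iid \<theta>) (\<lambda>x::'i \<Rightarrow> real. \<bar>x i\<bar>)"
    unfolding eq by (rule integrable_BG_iid_prod[OF assms f])
  have "(\<integral>y. f j y \<partial>BG \<theta>) = (if j = i then \<integral>y. \<bar>y\<bar> \<partial>BG \<theta> else 1)" for j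
    by (cases "j = i") (simp_all add: f_def B.prob_space[simplified])
  then have "(\<integral>x. \<bar>x i\<bar> \<partial>(BG_iid \<theta> :: ('i \<Rightarrow> real) measure)) = (\<integral>y. \<bar>y\<bar> \<partial>BG \<theta>)"
    unfolding eq integral_BG_iid_prod[OF assms f] by simp
  then show "(\<integral>x. \<bar>x i\<bar> \<partial>(BG_iid \<theta> :: ('i \<Rightarrow> real) measure)) \<le> \<theta>"
    using integral_BG_abs_le[OF assms] by simp
qed

lemma inner_integral_h_hess_ge:
  fixes w v :: "real^'m::finite"
  assumes th: "0 \<le> \<theta>" "\<theta> \<le> 1" and w: "norm w \<le> 1/4" and mu: "0 < \<mu>"
  shows "(1 - \<theta>) * \<theta> * (v \<bullet> v) / \<mu> - 3 * (1 - \<theta>) * \<theta> * ((w \<bullet> w) * (v \<bullet> v)) / \<mu> ^ 3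
      - 3 * (v \<bullet> v) * \<theta>
    \<le> v \<bullet> (\<integral>x. h_hess \<mu> w x v \<partial>(BG_iid \<theta> :: ('m option \<Rightarrow> real) measure))"
proof -
  let ?P = "BG_iid \<theta> :: ('m option \<Rightarrow> real) measure"
  define Q where "Q x = indicator {0} (x None) * (v \<bullet> xbar x)\<^sup>2" for x :: "'m option \<Rightarrow> real"
  define R where "R x = indicator {0} (x None) * ((w \<bullet> xbar x)\<^sup>2 * (v \<bullet> xbar x)\<^sup>2)" for x :: "'m option \<Rightarrow> real"
  have Q: "integrable ?P Q" "(\<integral>x. Q x \<partial>?P) = (1 - \<theta>) * \<theta> * (v \<bullet> v)"
    unfolding Q_def[abs_def]
    by (rule integrable_BG_iid_indicator_quadratic_form[OF th] integral_BG_iid_indicator_quadratic_form[OF th])+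
  have R: "integrable ?P R" "(\<integral>x. R x \<partial>?P) \<le> 3 * (1 - \<theta>) * \<theta> * ((w \<bullet> w) * (v \<bullet> v))"
    unfolding R_def[abs_def]
    by (rule integrable_BG_iid_indicator_quartic_form[OF th] integral_BG_iid_indicator_quartic_form_le[OF th])+
  note A = integrable_BG_iid_abs_component[OF th, of None] integral_BG_iid_abs_component_le[OF th, of None]
  have "(\<integral>x. R x \<partial>?P) / \<mu> ^ 3 \<le> 3 * (1 - \<theta>) * \<theta> * ((w \<bullet> w) * (v \<bullet> v)) / \<mu> ^ 3"
    using R(2) mu by (intro divide_right_mono) auto
  moreover have "3 * (v \<bullet> v) * (\<integral>x. \<bar>x None\<bar> \<partial>?P) \<le> 3 * (v \<bullet> v) * \<theta>"
    using A(2) by (intro mult_left_mono) auto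
  ultimately have "(1 - \<theta>) * \<theta> * (v \<bullet> v) / \<mu> - 3 * (1 - \<theta>) * \<theta> * ((w \<bullet> w) * (v \<bullet> v)) / \<mu> ^ 3
      - 3 * (v \<bullet> v) * \<theta>
      \<le> (\<integral>x. Q x \<partial>?P) / \<mu> - (\<integral>x. R x \<partial>?P) / \<mu> ^ 3 - 3 * (v \<bullet> v) * (\<integral>x. \<bar>x None\<bar> \<partial>?P)"
    unfolding Q(2) by linarith
  also have "\<dots> = (\<integral>x. Q x / \<mu> - R x / \<mu> ^ 3 - 3 * (v \<bullet> v) * \<bar>x None\<bar> \<partial>?P)"
  proof -
    have "integrable ?P (\<lambda>x. Q x / \<mu>)" "integrable ?P (\<lambda>x. R x / \<mu> ^ 3)"
        "integrable ?P (\<lambda>x. 3 * (v \<bullet> v) * \<bar>x None\<bar>)"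
      using Q(1) R(1) A(1) by auto
    then show ?thesis
      by (simp add: Bochner_Integration.integral_diff[OF Bochner_Integration.integrable_diff])
  qed
  also have "\<dots> \<le> (\<integral>x. v \<bullet> h_hess \<mu> w x v \<partial>?P)"
  proof (rule Bochner_Integration.integral_mono)
    show "integrable ?P (\<lambda>x. Q x / \<mu> - R x / \<mu> ^ 3 - 3 * (v \<bullet> v) * \<bar>x None\<bar>)"
      using Q(1) R(1) A(1) by auto
    show "integrable ?P (\<lambda>x. v \<bullet> h_hess \<mu> w x v)"
      using integrable_h_hess[OF th w mu] by auto
  qed (use inner_h_hess_ge_pointwise[OF w mu] in \<open>simp add: Q_def R_def\<close>)
  also have "\<dots> = v \<bullet> (\<integral>x. h_hess \<mu> w x v \<partial>?P)"
    using integrable_h_hess[OF th w mu] by (intro integral_inner_right) auto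
  finally show ?thesis .
qed

lemma Hessian_lower_bound_constant:
  fixes \<theta> \<mu> a b :: real
  assumes \<theta>: "0 < \<theta>" "\<theta> < 1/2" and \<mu>: "0 < \<mu>" "\<mu> \<le> 1/28" and a: "a \<le> \<mu>\<^sup>2 / 32" and b: "0 \<le> b"
  shows "\<theta> / (5 * sqrt (2 * pi) * \<mu>) * b
    \<le> (1 - \<theta>) * \<theta> * b / \<mu> - 3 * (1 - \<theta>) * \<theta> * (a * b) / \<mu> ^ 3 - 3 * b * \<theta>"
proof -
  have "12/5 \<le> sqrt (2 * pi)"
    using pi_gt3 by (intro real_le_rsqrt) (simp add: power_divide)
  then have "12 * \<mu> \<le> 5 * sqrt (2 * pi) * \<mu>"
    using \<mu> by (intro mult_right_mono) auto
  then have "\<theta> / (5 * sqrt (2 * pi) * \<mu>) * b \<le> \<theta> * b * (1 / (12 * \<mu>))"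
    using \<theta> \<mu> b by (simp add: divide_left_mono mult_right_mono)
  also have "1 / (12 * \<mu>) \<le> (1 - \<theta>) * (1 - 3 * a / \<mu>\<^sup>2) / \<mu> - 3"
  proof -
    have "a / \<mu>\<^sup>2 \<le> 1/32" using \<mu> a by (simp add: divide_le_eq)
    then have "1/2 * (29/32) \<le> (1 - \<theta>) * (1 - 3 * a / \<mu>\<^sup>2)"
      using \<theta> by (intro mult_mono) auto
    then have "29 / 64 / \<mu> \<le> (1 - \<theta>) * (1 - 3 * a / \<mu>\<^sup>2) / \<mu>"
      using \<mu> by (intro divide_right_mono) auto
    moreover have "1 / (12 * \<mu>) + 3 \<le> 29 / 64 / \<mu>"
      using \<mu> by (simp add: field_simps)
    ultimately show ?thesis by linarith
  qed
  then have "\<theta> * b * (1 / (12 * \<mu>)) \<le> \<theta> * b * ((1 - \<theta>) * (1 - 3 * a / \<mu>\<^sup>2) / \<mu> - 3)"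
    using \<theta> b by (intro mult_left_mono) auto
  also have "\<dots> = (1 - \<theta>) * \<theta> * b / \<mu> - 3 * (1 - \<theta>) * \<theta> * (a * b) / \<mu> ^ 3 - 3 * b * \<theta>"
    using \<mu> by (simp add: field_simps power2_eq_square power3_eq_cube)
  finally show ?thesis .
qed

lemma mu_le_inverse_28:
  assumes "0 < n" "\<mu> \<le> 1 / (20 * sqrt (real (n + 1)))"
  shows "\<mu> \<le> 1/28"
proof -
  have "7/5 \<le> sqrt 2" by (rule real_le_rsqrt) (simp add: power_divide)
  also have "sqrt 2 \<le> sqrt (real (n + 1))" using assms(1) by simp
  finally have "1 / (20 * sqrt (real (n + 1))) \<le> 1/28"
    by (intro divide_left_mono) auto
  with assms(2) show ?thesis by linarith
qed

lemma bounds_of_norm_le_mu_div_4_sqrt_2: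
  assumes "0 < \<mu>" "\<mu> \<le> 1" "norm w \<le> \<mu> / (4 * sqrt 2)"
  shows "w \<bullet> w \<le> \<mu>\<^sup>2 / 32" and "norm w \<le> 1/4"
proof -
  have "(norm w)\<^sup>2 \<le> (\<mu> / (4 * sqrt 2))\<^sup>2" using assms by (intro power_mono) auto
  then show "w \<bullet> w \<le> \<mu>\<^sup>2 / 32"
    by (simp add: power2_norm_eq_inner power_divide power_mult_distrib)
  have "1 \<le> sqrt (2::real)" by simp
  with assms(2) have "\<mu> \<le> 4 * sqrt 2 * (1/4)" by linarith
  then have "\<mu> / (4 * sqrt 2) \<le> 1/4" by (simp add: divide_le_eq)
  with assms(3) show "norm w \<le> 1/4" by linarith
qed

theorem mainTheorem7:
  fixes \<theta> \<mu> :: real and w :: "real^'m::finite"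
  assumes "0 < \<theta>" and "\<theta> < 1/2"
    and "0 < \<mu>" and "\<mu> \<le> 1 / (20 * sqrt (real (CARD('m) + 1)))"
    and "norm w \<le> \<mu> / (4 * sqrt 2)"
  shows "\<exists>H. has_hessian_at (obj \<theta> \<mu>) H w \<and>
           (\<forall>v. v \<bullet> H v \<ge> \<theta> / (5 * sqrt (2 * pi) * \<mu>) * (v \<bullet> v))"
proof -
  have th: "0 \<le> \<theta>" "\<theta> \<le> 1" using assms(1,2) by auto
  have \<mu>: "\<mu> \<le> 1/28" by (rule mu_le_inverse_28[OF _ assms(4)]) simp
  then have ww: "w \<bullet> w \<le> \<mu>\<^sup>2 / 32" and w: "norm w \<le> 1/4"
    using bounds_of_norm_le_mu_div_4_sqrt_2[OF assms(3) _ assms(5)] by auto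
  define H where "H v = (\<integral>x. h_hess \<mu> w x v \<partial>(BG_iid \<theta> :: ('m option \<Rightarrow> real) measure))" for v
  have "has_hessian_at (obj \<theta> \<mu>) H w"
    unfolding has_hessian_at_def
  proof (intro exI conjI allI impI)
    show "(obj \<theta> \<mu> has_derivative (\<lambda>v. (\<integral>x. h_grad \<mu> u x \<partial>BG_iid \<theta>) \<bullet> v)) (at u)"
      if "norm u < 1" for u
      using that by (rule obj_has_derivative[OF th _ assms(3)])
    show "((\<lambda>u. \<integral>x. h_grad \<mu> u x \<partial>(BG_iid \<theta> :: ('m option \<Rightarrow> real) measure)) has_derivative H) (at w)"
      unfolding H_def[abs_def] by (rule integral_h_grad_has_derivative[OF th w assms(3)])
  qed
  moreover have "\<theta> / (5 * sqrt (2 * pi) * \<mu>) * (v \<bullet> v) \<le> v \<bullet> H v" for v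
    unfolding H_def
    by (rule order_trans[OF Hessian_lower_bound_constant[OF assms(1,2,3) \<mu> ww inner_ge_zero]
          inner_integral_h_hess_ge[OF th w assms(3)]])
  ultimately show ?thesis by blast
qed

end
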